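(* For every integer $k\ge 0$ there is a wall on $k$ colors whose graph has clique size $k$.
   Context: An interval graph $G=(V,E)$ comes with an interval representation $v\mapsto I_v$ (intervals of $\mathbb{R}$, distinct $u,v$ adjacent iff $I_u\cap I_v\ne\emptyset$); graphs are finite. $N[v]$ is the closed neighborhood of $v$ and $f(U)$ the image of $U$. A wall is a pair $(G,f)$ where $G$ is an interval graph on vertex set $V$ with a given interval representation, $f\colon V\to\{1,2,\dots\}$ is a proper coloring of $G$, and $f(N[v])\supseteq\{1,\dots,f(v)\}$ for every $v\in V$. It is a wall on $t$ colors if $|f(V)|=t$; its clique size is the clique number of $G$. *)

theory Defs
  imports "HOL-Analysis.Analysis"
begin

definition interval_rep :: "'v set \<Rightarrow> ('v \<Rightarrow> real set) \<Rightarrow> bool" where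
  "interval_rep V I \<longleftrightarrow> finite V \<and> (\<forall>v\<in>V. is_interval (I v) \<and> I v \<noteq> {})"

definition iadj :: "('v \<Rightarrow> real set) \<Rightarrow> 'v \<Rightarrow> 'v \<Rightarrow> bool" where
  "iadj I u v \<longleftrightarrow> u \<noteq> v \<and> I u \<inter> I v \<noteq> {}"

definition closed_nbhd :: "'v set \<Rightarrow> ('v \<Rightarrow> real set) \<Rightarrow> 'v \<Rightarrow> 'v set" where
  "closed_nbhd V I v = {u \<in> V. u = v \<or> iadj I u v}"

definition proper_coloring :: "'v set \<Rightarrow> ('v \<Rightarrow> real set) \<Rightarrow> ('v \<Rightarrow> nat) \<Rightarrow> bool" where
  "proper_coloring V I f \<longleftrightarrow>
     (\<forall>v\<in>V. f v \<ge> 1) \<and> (\<forall>u\<in>V. \<forall>v\<in>V. iadj I u v \<longrightarrow> f u \<noteq> f v)"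

definition is_wall :: "'v set \<Rightarrow> ('v \<Rightarrow> real set) \<Rightarrow> ('v \<Rightarrow> nat) \<Rightarrow> bool" where
  "is_wall V I f \<longleftrightarrow> interval_rep V I \<and> proper_coloring V I f \<and>
     (\<forall>v\<in>V. {1..f v} \<subseteq> f ` closed_nbhd V I v)"

definition is_clique :: "'v set \<Rightarrow> ('v \<Rightarrow> real set) \<Rightarrow> 'v set \<Rightarrow> bool" where
  "is_clique V I C \<longleftrightarrow> C \<subseteq> V \<and> (\<forall>u\<in>C. \<forall>v\<in>C. u \<noteq> v \<longrightarrow> iadj I u v)"

definition clique_number :: "'v set \<Rightarrow> ('v \<Rightarrow> real set) \<Rightarrow> nat" where
  "clique_number V I = Max (card ` {C. is_clique V I C})"

end

theory Submission
  imports Defs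
begin

text \<open>Represent every vertex of \<open>{1..k}\<close> by the same point: the result is the complete graph
  \<open>K\<^sub>k\<close>, whose clique number is \<open>k\<close>. Colouring it bijectively by \<open>1, \<dots>, k\<close> is proper, and every
  closed neighbourhood is the whole vertex set, so it sees all \<open>k\<close> colours.\<close>

lemma iadj_const_interval: "iadj (\<lambda>_. S) u v \<longleftrightarrow> u \<noteq> v \<and> S \<noteq> {}"
  by (simp add: iadj_def)

lemma closed_nbhd_const_interval:
  assumes "v \<in> V"
  shows "closed_nbhd V (\<lambda>_. S) v = (if S = {} then {v} else V)"
  using assms by (auto simp: closed_nbhd_def iadj_const_interval)

lemma cliques_const_interval:
  assumes "S \<noteq> {}"
  shows "{C. is_clique V (\<lambda>_. S) C} = Pow V"
  using assms by (auto simp: is_clique_def iadj_const_interval)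

lemma clique_number_const_interval:
  assumes "finite V" and "S \<noteq> {}"
  shows "clique_number V (\<lambda>_. S) = card V"
  unfolding clique_number_def cliques_const_interval[OF assms(2)]
proof (rule Max_eqI)
  show "finite (card ` Pow V)"
    using assms(1) by simp
  show "n \<le> card V" if "n \<in> card ` Pow V" for n
    using that assms(1) card_mono by fastforce
  show "card V \<in> card ` Pow V"
    by blast
qed

lemma is_wall_const_interval:
  assumes "finite V" and "is_interval S" and "S \<noteq> {}"
    and "inj_on f V" and "f ` V = {1..n}"
  shows "is_wall V (\<lambda>_. S) f"
proof -
  have "interval_rep V (\<lambda>_. S)"
    using assms(1-3) by (simp add: interval_rep_def)
  moreover have "proper_coloring V (\<lambda>_. S) f"
    using assms(4,5) by (auto simp: proper_coloring_def iadj_const_interval inj_on_def)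
  moreover have "{1..f v} \<subseteq> f ` closed_nbhd V (\<lambda>_. S) v" if "v \<in> V" for v
    using that assms(3,5) by (auto simp: closed_nbhd_const_interval)
  ultimately show ?thesis
    by (simp add: is_wall_def)
qed

theorem mainTheorem4:
  fixes k :: nat
  shows "\<exists>(V :: nat set) (I :: nat \<Rightarrow> real set) (f :: nat \<Rightarrow> nat).
           is_wall V I f \<and> card (f ` V) = k \<and> clique_number V I = k"
proof (intro exI conjI)
  show "is_wall {1..k} (\<lambda>_. {0}) id"
    by (rule is_wall_const_interval) (auto simp: is_interval_1)
  show "card (id ` {1..k}) = k"
    by simp
  show "clique_number {1..k} (\<lambda>_. {0::real}) = k"
    by (simp add: clique_number_const_interval)
qed

end
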